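(* For the system $$(u_{0,0}-u_{1,1})(v_{1,0}-v_{0,1})-\alpha+\beta=0,\qquad (v_{0,0}-v_{1,1})(u_{1,0}-u_{0,1})-\alpha+\beta=0,$$ the pair $$(\rho,\sigma)=\big(\ln|(u_{1,0}-u_{-1,0})(v_{1,0}-v_{-1,0})|,\ \ \ln|(u_{0,1}-u_{-1,0})(v_{0,1}-v_{-1,0})|\big)$$ is a conservation law, i.e. $(\mathcal T-1)\rho=(\mathcal S-1)\sigma$ on solutions.
   Context: Unknowns $u,v$ on $\mathbb Z^2$, $u_{i,j}=u(n+i,m+j)$, similarly $v$; $\alpha\neq\beta$ constants. Shifts $\mathcal S:n\mapsto n+1$, $\mathcal T:m\mapsto m+1$, acting by $\mathcal S^k\mathcal T^\ell(f_{i,j})=f_{i+k,j+\ell}$. A conservation law is a pair $(\rho,\sigma)$ of functions of finitely many shifts of $(u,v)$ with $(\mathcal T-1)\rho=(\mathcal S-1)\sigma$ holding for all solutions of the system (on which all arguments of logarithms are nonzero). *)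

theory Defs
  imports Complex_Main
begin

text \<open>Fields on Z^2: f n m stands for f(n,m); f_{i,j} = f (n+i) (m+j).\<close>

definition is_solution :: "real \<Rightarrow> real \<Rightarrow> (int \<Rightarrow> int \<Rightarrow> real) \<Rightarrow> (int \<Rightarrow> int \<Rightarrow> real) \<Rightarrow> bool" where
  "is_solution \<alpha> \<beta> u v \<longleftrightarrow> (\<forall>n m.
     (u n m - u (n+1) (m+1)) * (v (n+1) m - v n (m+1)) - \<alpha> + \<beta> = 0 \<and>
     (v n m - v (n+1) (m+1)) * (u (n+1) m - u n (m+1)) - \<alpha> + \<beta> = 0)"

definition rho_arg :: "(int \<Rightarrow> int \<Rightarrow> real) \<Rightarrow> (int \<Rightarrow> int \<Rightarrow> real) \<Rightarrow> int \<Rightarrow> int \<Rightarrow> real" where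
  "rho_arg u v n m = (u (n+1) m - u (n-1) m) * (v (n+1) m - v (n-1) m)"

definition sigma_arg :: "(int \<Rightarrow> int \<Rightarrow> real) \<Rightarrow> (int \<Rightarrow> int \<Rightarrow> real) \<Rightarrow> int \<Rightarrow> int \<Rightarrow> real" where
  "sigma_arg u v n m = (u n (m+1) - u (n-1) m) * (v n (m+1) - v (n-1) m)"

definition rho :: "(int \<Rightarrow> int \<Rightarrow> real) \<Rightarrow> (int \<Rightarrow> int \<Rightarrow> real) \<Rightarrow> int \<Rightarrow> int \<Rightarrow> real" where
  "rho u v n m = ln \<bar>rho_arg u v n m\<bar>"

definition sigma :: "(int \<Rightarrow> int \<Rightarrow> real) \<Rightarrow> (int \<Rightarrow> int \<Rightarrow> real) \<Rightarrow> int \<Rightarrow> int \<Rightarrow> real" where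
  "sigma u v n m = ln \<bar>sigma_arg u v n m\<bar>"

end

theory Submission
  imports Defs
begin

text \<open>Put \<open>c = \<alpha> - \<beta>\<close>. Each quad equation expresses a diagonal difference of one field
  as \<open>c\<close> divided by a cross difference of the other. The long differences
  \<open>u(n+1,m+1) - u(n-1,m+1)\<close> and \<open>v(n+1,m+1) - v(n-1,m+1)\<close> are therefore differences of two
  such quotients, coming from the quads at \<open>(n,m)\<close> and \<open>(n-1,m)\<close>. This gives the
  multiplicative relation \<open>\<rho>(n,m+1) \<sigma>(n,m) = \<sigma>(n+1,m) \<rho>(n,m)\<close> between the arguments of the
  logarithms, and taking \<open>ln |\<cdot>|\<close> yields the conservation law.\<close>

lemma diff_of_two_quotients:
  fixes a b c p q r :: "'a::comm_ring"
  assumes "(p - q) * a = c" and "b * (p - r) = c"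
  shows "a * b * (q - r) = c * (a - b)"
proof -
  have "a * b * (q - r) = a * (b * (p - r)) - b * ((p - q) * a)"
    by (simp add: algebra_simps)
  also have "\<dots> = c * (a - b)"
    using assms by (simp add: algebra_simps)
  finally show ?thesis .
qed

lemma solution_quad_eqs:
  assumes "is_solution \<alpha> \<beta> u v"
  shows "(u n m - u (n+1) (m+1)) * (v (n+1) m - v n (m+1)) = \<alpha> - \<beta>"
    and "(v n m - v (n+1) (m+1)) * (u (n+1) m - u n (m+1)) = \<alpha> - \<beta>"
proof -
  have "(u n m - u (n+1) (m+1)) * (v (n+1) m - v n (m+1)) - \<alpha> + \<beta> = 0 \<and>
        (v n m - v (n+1) (m+1)) * (u (n+1) m - u n (m+1)) - \<alpha> + \<beta> = 0"
    using assms unfolding is_solution_def by blast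
  then show "(u n m - u (n+1) (m+1)) * (v (n+1) m - v n (m+1)) = \<alpha> - \<beta>"
    and "(v n m - v (n+1) (m+1)) * (u (n+1) m - u n (m+1)) = \<alpha> - \<beta>"
    by linarith+
qed

lemma rho_sigma_product_balance:
  assumes sol: "is_solution \<alpha> \<beta> u v" and "\<alpha> \<noteq> \<beta>"
  shows "rho_arg u v n (m+1) * sigma_arg u v n m = sigma_arg u v (n+1) m * rho_arg u v n m"
proof -
  define c where "c = \<alpha> - \<beta>"
  have "c \<noteq> 0" using \<open>\<alpha> \<noteq> \<beta>\<close> by (simp add: c_def)
  note quad = solution_quad_eqs[OF sol, folded c_def]
  have e1: "(u n m - u (n+1) (m+1)) * (v (n+1) m - v n (m+1)) = c"
    and e2: "(v n m - v (n+1) (m+1)) * (u (n+1) m - u n (m+1)) = c"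
    using quad[of n m] by simp_all
  have e3: "(u (n-1) m - u n (m+1)) * (v n m - v (n-1) (m+1)) = c"
    and e4: "(v (n-1) m - v n (m+1)) * (u n m - u (n-1) (m+1)) = c"
    using quad[of "n-1" m] by simp_all
  define a\<^sub>v b\<^sub>v a\<^sub>u b\<^sub>u where
    "a\<^sub>v = v (n+1) m - v n (m+1)" "b\<^sub>v = v (n-1) m - v n (m+1)"
    "a\<^sub>u = u (n+1) m - u n (m+1)" "b\<^sub>u = u (n-1) m - u n (m+1)"
  have u_diag: "a\<^sub>v * b\<^sub>v * (u (n+1) (m+1) - u (n-1) (m+1)) = c * (v (n+1) m - v (n-1) m)"
    using diff_of_two_quotients[of "u n m" "u (n+1) (m+1)" a\<^sub>v c b\<^sub>v "u (n-1) (m+1)"] e1 e4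
    by (simp add: a\<^sub>v_b\<^sub>v_a\<^sub>u_b\<^sub>u_def)
  have v_diag: "a\<^sub>u * b\<^sub>u * (v (n+1) (m+1) - v (n-1) (m+1)) = c * (u (n+1) m - u (n-1) m)"
    using diff_of_two_quotients[of "v n m" "v (n+1) (m+1)" a\<^sub>u c b\<^sub>u "v (n-1) (m+1)"] e2 e3
    by (simp add: a\<^sub>v_b\<^sub>v_a\<^sub>u_b\<^sub>u_def mult.commute)
  have "a\<^sub>v \<noteq> 0" "a\<^sub>u \<noteq> 0"
    using e1 e2 \<open>c \<noteq> 0\<close> by (auto simp: a\<^sub>v_b\<^sub>v_a\<^sub>u_b\<^sub>u_def)
  have "c * c = ((u n m - u (n+1) (m+1)) * a\<^sub>v) * ((v n m - v (n+1) (m+1)) * a\<^sub>u)"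
    using e1 e2 by (simp add: a\<^sub>v_b\<^sub>v_a\<^sub>u_b\<^sub>u_def)
  also have "\<dots> = a\<^sub>v * a\<^sub>u * sigma_arg u v (n+1) m"
    by (simp add: sigma_arg_def algebra_simps)
  finally have c_squared: "c * c = a\<^sub>v * a\<^sub>u * sigma_arg u v (n+1) m" .
  have "a\<^sub>v * a\<^sub>u * (rho_arg u v n (m+1) * sigma_arg u v n m)
      = (a\<^sub>v * b\<^sub>v * (u (n+1) (m+1) - u (n-1) (m+1))) * (a\<^sub>u * b\<^sub>u * (v (n+1) (m+1) - v (n-1) (m+1)))"
    by (simp add: rho_arg_def sigma_arg_def a\<^sub>v_b\<^sub>v_a\<^sub>u_b\<^sub>u_def algebra_simps)
  also have "\<dots> = c * c * rho_arg u v n m"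
    by (simp only: u_diag v_diag) (simp add: rho_arg_def algebra_simps)
  also have "\<dots> = a\<^sub>v * a\<^sub>u * (sigma_arg u v (n+1) m * rho_arg u v n m)"
    by (simp add: c_squared)
  finally show ?thesis
    using \<open>a\<^sub>v \<noteq> 0\<close> \<open>a\<^sub>u \<noteq> 0\<close> by simp
qed

lemma ln_abs_mult:
  fixes x y :: real
  assumes "x \<noteq> 0" and "y \<noteq> 0"
  shows "ln \<bar>x * y\<bar> = ln \<bar>x\<bar> + ln \<bar>y\<bar>"
  using assms by (simp add: abs_mult ln_mult)

theorem mainTheorem5:
  fixes u v :: "int \<Rightarrow> int \<Rightarrow> real" and \<alpha> \<beta> :: real
  assumes "\<alpha> \<noteq> \<beta>"
    and "is_solution \<alpha> \<beta> u v"
    and "\<forall>n m. rho_arg u v n m \<noteq> 0"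
    and "\<forall>n m. sigma_arg u v n m \<noteq> 0"
  shows "\<forall>n m. rho u v n (m+1) - rho u v n m = sigma u v (n+1) m - sigma u v n m"
proof (intro allI)
  fix n m
  have "ln \<bar>rho_arg u v n (m+1) * sigma_arg u v n m\<bar>
      = ln \<bar>sigma_arg u v (n+1) m * rho_arg u v n m\<bar>"
    using rho_sigma_product_balance[OF assms(2,1)] by simp
  then have "rho u v n (m+1) + sigma u v n m = sigma u v (n+1) m + rho u v n m"
    using assms(3,4) by (simp add: ln_abs_mult rho_def sigma_def)
  then show "rho u v n (m+1) - rho u v n m = sigma u v (n+1) m - sigma u v n m"
    by linarith
qed

end
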